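(* Let $(W,S)$ be a Coxeter system with $S$ finite, and let $F:W\to\operatorname{Ad}(Q_W)$ be the map with $F(w)=e_{s_1}\cdots e_{s_k}$ whenever $w=s_1\cdots s_k$ ($s_i\in S$) is a reduced expression. Define $c:W\times W\to C_W$ by $c(w_1,w_2)=F(w_1)F(w_2)F(w_1w_2)^{-1}$. Then $c$ is a normalized $2$-cocycle (with values in the trivial $W$-module $C_W$), and its cohomology class $[c]\in H^2(W,C_W)$ equals the class $u_\phi$ of the central extension $1\to C_W\to\operatorname{Ad}(Q_W)\xrightarrow{\phi}W\to1$.
   Context: A Coxeter system $(W,S)$: $S$ finite, $m:S\times S\to\mathbb{N}\cup\{\infty\}$ with $m(s,s)=1$, $2\le m(s,t)=m(t,s)\le\infty$ for $s\ne t$, $W=\langle s\in S\mid (st)^{m(s,t)}=1\ (m(s,t)<\infty)\rangle$. The Coxeter quandle $Q_W=\bigcup_{w\in W}w^{-1}Sw$ has operation $x\ast y=yxy$; $\operatorname{Ad}(Q_W)=\langle e_x\ (x\in Q_W)\mid e_y^{-1}e_xe_y=e_{x\ast y}\rangle$; $\phi:\operatorname{Ad}(Q_W)\to W$ is $e_x\mapsto x$, and $C_W=\ker\phi$, which is a central subgroup. The map $F$ is well defined, i.e. the product $e_{s_1}\cdots e_{s_k}$ does not depend on the choice of reduced expression of $w$ (this follows from Matsumoto's theorem, since $(e_se_t)_{m(s,t)}=(e_te_s)_{m(s,t)}$ holds, where $(gh)_m$ denotes the alternating product $ghg\cdots$ with $m$ factors). The class $u_\phi$ is the element of $H^2(W,C_W)$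 classifying the central extension in the standard way. *)

theory Defs
  imports "HOL-Algebra.Algebra" "HOL-Library.Extended_Nat"
begin

text \<open>Words in the free group on generators of type 'x: a letter (x, True) stands for x,
  a letter (x, False) for its inverse.\<close>

type_synonym 'x word = "('x \<times> bool) list"

definition words_on :: "'x set \<Rightarrow> 'x word set" where
  "words_on Xs = {w. fst ` set w \<subseteq> Xs}"

inductive pres_eq :: "('x word \<times> 'x word) set \<Rightarrow> 'x word \<Rightarrow> 'x word \<Rightarrow> bool"
  for R :: "('x word \<times> 'x word) set" where
  pe_refl: "pres_eq R w w"
| pe_sym: "pres_eq R u v \<Longrightarrow> pres_eq R v u"
| pe_trans: "pres_eq R u v \<Longrightarrow> pres_eq R v w \<Longrightarrow> pres_eq R u w"
| pe_cancel: "pres_eq R (u @ [(x, b), (x, \<not> b)] @ v) (u @ v)"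
| pe_rel: "(r1, r2) \<in> R \<Longrightarrow> pres_eq R (u @ r1 @ v) (u @ r2 @ v)"

definition pres_class :: "'x set \<Rightarrow> ('x word \<times> 'x word) set \<Rightarrow> 'x word \<Rightarrow> 'x word set" where
  "pres_class Xs R w = {v \<in> words_on Xs. pres_eq R w v}"

definition presented_group :: "'x set \<Rightarrow> ('x word \<times> 'x word) set \<Rightarrow> 'x word set monoid" where
  "presented_group Xs R =
     \<lparr>carrier = pres_class Xs R ` words_on Xs,
      monoid.mult = (\<lambda>A B. {v. \<exists>a\<in>A. \<exists>b\<in>B. v \<in> pres_class Xs R (a @ b)}),
      monoid.one = pres_class Xs R []\<rparr>"

definition pres_gen :: "'x set \<Rightarrow> ('x word \<times> 'x word) set \<Rightarrow> 'x \<Rightarrow> 'x word set" where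
  "pres_gen Xs R x = pres_class Xs R [(x, True)]"

definition word_eval :: "('g, 'm) monoid_scheme \<Rightarrow> ('x \<Rightarrow> 'g) \<Rightarrow> 'x word \<Rightarrow> 'g" where
  "word_eval G f w = foldr (\<lambda>(x, b) acc. (if b then f x else inv\<^bsub>G\<^esub> (f x)) \<otimes>\<^bsub>G\<^esub> acc) w \<one>\<^bsub>G\<^esub>"

definition induced_map :: "('g, 'm) monoid_scheme \<Rightarrow> ('x \<Rightarrow> 'g) \<Rightarrow> 'x word set \<Rightarrow> 'g" where
  "induced_map G f A = word_eval G f (SOME a. a \<in> A)"

definition coxeter_matrix :: "('s \<Rightarrow> 's \<Rightarrow> enat) \<Rightarrow> bool" where
  "coxeter_matrix m \<longleftrightarrow> (\<forall>s. m s s = 1) \<and> (\<forall>s t. s \<noteq> t \<longrightarrow> 2 \<le> m s t \<and> m s t = m t s)"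

definition coxeter_rels :: "('s \<Rightarrow> 's \<Rightarrow> enat) \<Rightarrow> ('s word \<times> 's word) set" where
  "coxeter_rels m = {(concat (replicate k [(s, True), (t, True)]), []) | s t k. m s t = enat k}"

definition coxeter_group :: "('s \<Rightarrow> 's \<Rightarrow> enat) \<Rightarrow> 's word set monoid" where
  "coxeter_group m = presented_group UNIV (coxeter_rels m)"

definition cox_gen :: "('s \<Rightarrow> 's \<Rightarrow> enat) \<Rightarrow> 's \<Rightarrow> 's word set" where
  "cox_gen m s = pres_gen UNIV (coxeter_rels m) s"

definition cox_prod :: "('s \<Rightarrow> 's \<Rightarrow> enat) \<Rightarrow> 's list \<Rightarrow> 's word set" where
  "cox_prod m ss = foldr (\<lambda>s acc. cox_gen m s \<otimes>\<^bsub>coxeter_group m\<^esub> acc) ss \<one>\<^bsub>coxeter_group m\<^esub>"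

definition reduced_expr :: "('s \<Rightarrow> 's \<Rightarrow> enat) \<Rightarrow> 's word set \<Rightarrow> 's list \<Rightarrow> bool" where
  "reduced_expr m w ss \<longleftrightarrow> cox_prod m ss = w \<and> (\<forall>ts. cox_prod m ts = w \<longrightarrow> length ss \<le> length ts)"

definition coxeter_quandle :: "('s \<Rightarrow> 's \<Rightarrow> enat) \<Rightarrow> 's word set set" where
  "coxeter_quandle m = (\<Union>w\<in>carrier (coxeter_group m). \<Union>s. 
      {inv\<^bsub>coxeter_group m\<^esub> w \<otimes>\<^bsub>coxeter_group m\<^esub> cox_gen m s \<otimes>\<^bsub>coxeter_group m\<^esub> w})"

definition quandle_op :: "('s \<Rightarrow> 's \<Rightarrow> enat) \<Rightarrow> 's word set \<Rightarrow> 's word set \<Rightarrow> 's word set" where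
  "quandle_op m x y = y \<otimes>\<^bsub>coxeter_group m\<^esub> x \<otimes>\<^bsub>coxeter_group m\<^esub> y"

definition adj_rels :: "('s \<Rightarrow> 's \<Rightarrow> enat) \<Rightarrow> ('s word set word \<times> 's word set word) set" where
  "adj_rels m = {([(y, False), (x, True), (y, True)], [(quandle_op m x y, True)]) | x y.
                  x \<in> coxeter_quandle m \<and> y \<in> coxeter_quandle m}"

definition adj_group :: "('s \<Rightarrow> 's \<Rightarrow> enat) \<Rightarrow> 's word set word set monoid" where
  "adj_group m = presented_group (coxeter_quandle m) (adj_rels m)"

definition adj_gen :: "('s \<Rightarrow> 's \<Rightarrow> enat) \<Rightarrow> 's word set \<Rightarrow> 's word set word set" where
  "adj_gen m x = pres_gen (coxeter_quandle m) (adj_rels m) x"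

definition adj_phi :: "('s \<Rightarrow> 's \<Rightarrow> enat) \<Rightarrow> 's word set word set \<Rightarrow> 's word set" where
  "adj_phi m = induced_map (coxeter_group m) id"

definition C_group :: "('s \<Rightarrow> 's \<Rightarrow> enat) \<Rightarrow> 's word set word set monoid" where
  "C_group m = (adj_group m)\<lparr>carrier := kernel (adj_group m) (coxeter_group m) (adj_phi m)\<rparr>"

definition F_map :: "('s \<Rightarrow> 's \<Rightarrow> enat) \<Rightarrow> 's word set \<Rightarrow> 's word set word set" where
  "F_map m w = foldr (\<lambda>s acc. adj_gen m (cox_gen m s) \<otimes>\<^bsub>adj_group m\<^esub> acc)
                 (SOME ss. reduced_expr m w ss) \<one>\<^bsub>adj_group m\<^esub>"

definition cox_c :: "('s \<Rightarrow> 's \<Rightarrow> enat) \<Rightarrow> 's word set \<Rightarrow> 's word set \<Rightarrow> 's word set word set" where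
  "cox_c m w1 w2 = F_map m w1 \<otimes>\<^bsub>adj_group m\<^esub> F_map m w2 \<otimes>\<^bsub>adj_group m\<^esub>
                    inv\<^bsub>adj_group m\<^esub> (F_map m (w1 \<otimes>\<^bsub>coxeter_group m\<^esub> w2))"

section \<open>Second cohomology with coefficients in a trivial module (written multiplicatively)\<close>

definition two_cocycle :: "('g, 'm) monoid_scheme \<Rightarrow> ('k, 'n) monoid_scheme \<Rightarrow> ('g \<Rightarrow> 'g \<Rightarrow> 'k) \<Rightarrow> bool" where
  "two_cocycle G K c \<longleftrightarrow>
     (\<forall>a\<in>carrier G. \<forall>b\<in>carrier G. c a b \<in> carrier K) \<and>
     (\<forall>a\<in>carrier G. \<forall>b\<in>carrier G. \<forall>d\<in>carrier G.
        c b d \<otimes>\<^bsub>K\<^esub> c a (b \<otimes>\<^bsub>G\<^esub> d) = c (a \<otimes>\<^bsub>G\<^esub> b) d \<otimes>\<^bsub>K\<^esub> c a b)"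

definition normalized_two_cocycle :: "('g, 'm) monoid_scheme \<Rightarrow> ('k, 'n) monoid_scheme \<Rightarrow> ('g \<Rightarrow> 'g \<Rightarrow> 'k) \<Rightarrow> bool" where
  "normalized_two_cocycle G K c \<longleftrightarrow> two_cocycle G K c \<and>
     (\<forall>a\<in>carrier G. c \<one>\<^bsub>G\<^esub> a = \<one>\<^bsub>K\<^esub> \<and> c a \<one>\<^bsub>G\<^esub> = \<one>\<^bsub>K\<^esub>)"

definition cohomologous :: "('g, 'm) monoid_scheme \<Rightarrow> ('k, 'n) monoid_scheme \<Rightarrow> ('g \<Rightarrow> 'g \<Rightarrow> 'k) \<Rightarrow> ('g \<Rightarrow> 'g \<Rightarrow> 'k) \<Rightarrow> bool" where
  "cohomologous G K c d \<longleftrightarrow> (\<exists>f \<in> carrier G \<rightarrow> carrier K. \<forall>a\<in>carrier G. \<forall>b\<in>carrier G.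
       c a b = d a b \<otimes>\<^bsub>K\<^esub> (f a \<otimes>\<^bsub>K\<^esub> f b \<otimes>\<^bsub>K\<^esub> inv\<^bsub>K\<^esub> (f (a \<otimes>\<^bsub>G\<^esub> b))))"

definition coh_class :: "('g, 'm) monoid_scheme \<Rightarrow> ('k, 'n) monoid_scheme \<Rightarrow> ('g \<Rightarrow> 'g \<Rightarrow> 'k) \<Rightarrow> ('g \<Rightarrow> 'g \<Rightarrow> 'k) set" where
  "coh_class G K c = {d. two_cocycle G K d \<and> cohomologous G K d c}"

text \<open>Class u_\<phi> of a central extension 1 \<rightarrow> ker \<phi> \<rightarrow> E \<rightarrow> G \<rightarrow> 1: the class of the cocycle
  (a,b) \<mapsto> \<sigma>(a)\<sigma>(b)\<sigma>(ab)^{-1} of a set-theoretic section \<sigma> of \<phi> (independent of \<sigma>).\<close>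
definition section_cocycle :: "('e, 'm) monoid_scheme \<Rightarrow> ('g, 'n) monoid_scheme \<Rightarrow> ('g \<Rightarrow> 'e) \<Rightarrow> 'g \<Rightarrow> 'g \<Rightarrow> 'e" where
  "section_cocycle E G \<sigma> a b = \<sigma> a \<otimes>\<^bsub>E\<^esub> \<sigma> b \<otimes>\<^bsub>E\<^esub> inv\<^bsub>E\<^esub> (\<sigma> (a \<otimes>\<^bsub>G\<^esub> b))"

definition extension_class :: "('e, 'm) monoid_scheme \<Rightarrow> ('g, 'n) monoid_scheme \<Rightarrow> ('e \<Rightarrow> 'g) \<Rightarrow> ('g \<Rightarrow> 'g \<Rightarrow> 'e) set" where
  "extension_class E G \<phi> =
     (\<Union>\<sigma> \<in> {\<sigma>. \<sigma> \<in> carrier G \<rightarrow> carrier E \<and> (\<forall>g\<in>carrier G. \<phi> (\<sigma> g) = g)}.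
        coh_class G (E\<lparr>carrier := kernel E G \<phi>\<rparr>) (section_cocycle E G \<sigma>))"

end

theory Submission
  imports Defs
begin

text \<open>A set-theoretic section \<sigma> of a central extension \<phi> : E \<rightarrow> G defines the 2-cocycle
  \<sigma>(a) \<sigma>(b) \<sigma>(ab)\<inverse> with values in the kernel, and the cocycles of two sections \<sigma>, \<tau> differ by
  the coboundary of the kernel-valued cochain \<sigma> \<tau>\<inverse>; so each of them represents u_\<phi>.
  The extension \<phi> : Ad(Q_W) \<rightarrow> W is central because conjugation by h acts on the generators
  through \<phi>(h), namely e_x h = h e_y with y = \<phi>(h)\<inverse> x \<phi>(h). Finally F is a section of \<phi> with
  F(1) = 1, since the empty word is the only reduced expression of 1.\<close>

section \<open>Presented groups\<close>

lemma pres_eq_context: "pres_eq R u v \<Longrightarrow> pres_eq R (p @ u @ q) (p @ v @ q)"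
proof (induction rule: pres_eq.induct)
  case (pe_cancel u x b v)
  show ?case using pres_eq.pe_cancel[of R "p @ u" x b "v @ q"] by simp
next
  case (pe_rel r1 r2 u v)
  show ?case using pres_eq.pe_rel[OF pe_rel, of "p @ u" "v @ q"] by simp
qed (blast intro: pres_eq.pe_refl pres_eq.pe_sym pres_eq.pe_trans)+

lemma pres_eq_append: "pres_eq R u u' \<Longrightarrow> pres_eq R v v' \<Longrightarrow> pres_eq R (u @ v) (u' @ v')"
  using pres_eq_context[of R u u' "[]" v] pres_eq_context[of R v v' u' "[]"]
  by (auto intro: pres_eq.pe_trans)

definition word_inv :: "'x word \<Rightarrow> 'x word" where
  "word_inv w = rev (map (\<lambda>(x, b). (x, \<not> b)) w)"

lemma word_inv_simps [simp]:
  "word_inv [] = []" "word_inv ((x, b) # w) = word_inv w @ [(x, \<not> b)]"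
  by (simp_all add: word_inv_def)

lemma words_on_simps [simp]:
  "[] \<in> words_on Xs" "(x, b) # w \<in> words_on Xs \<longleftrightarrow> x \<in> Xs \<and> w \<in> words_on Xs"
  "u @ v \<in> words_on Xs \<longleftrightarrow> u \<in> words_on Xs \<and> v \<in> words_on Xs"
  "word_inv w \<in> words_on Xs \<longleftrightarrow> w \<in> words_on Xs" "w \<in> words_on UNIV"
  by (auto simp: words_on_def word_inv_def image_image case_prod_beta)

lemma pres_eq_word_inv_append: "pres_eq R (word_inv w @ w) []"
proof (induction w)
  case Nil
  show ?case by (simp add: pres_eq.pe_refl)
next
  case (Cons a w)
  obtain x b where a: "a = (x, b)" by fastforce
  have "pres_eq R (word_inv w @ [(x, \<not> b), (x, \<not> \<not> b)] @ w) (word_inv w @ w)"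
    by (rule pres_eq.pe_cancel)
  with Cons.IH a show ?case by (auto intro: pres_eq.pe_trans)
qed

lemma pres_class_self: "w \<in> words_on Xs \<Longrightarrow> w \<in> pres_class Xs R w"
  by (simp add: pres_class_def pres_eq.pe_refl)

lemma pres_class_eqI: "pres_eq R u v \<Longrightarrow> pres_class Xs R u = pres_class Xs R v"
  unfolding pres_class_def by (auto intro: pres_eq.pe_trans pres_eq.pe_sym)

lemma presented_group_carrier: "carrier (presented_group Xs R) = pres_class Xs R ` words_on Xs"
  by (simp add: presented_group_def)

lemma presented_group_one: "\<one>\<^bsub>presented_group Xs R\<^esub> = pres_class Xs R []"
  by (simp add: presented_group_def)

lemma presented_group_mult:
  assumes "u \<in> words_on Xs" "v \<in> words_on Xs"
  shows "pres_class Xs R u \<otimes>\<^bsub>presented_group Xs R\<^esub> pres_class Xs R v = pres_class Xs R (u @ v)"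
proof -
  have "{w. \<exists>a\<in>pres_class Xs R u. \<exists>b\<in>pres_class Xs R v. w \<in> pres_class Xs R (a @ b)}
      = pres_class Xs R (u @ v)"
  proof safe
    fix w a b
    assume "a \<in> pres_class Xs R u" "b \<in> pres_class Xs R v" "w \<in> pres_class Xs R (a @ b)"
    moreover from this have "pres_class Xs R (a @ b) = pres_class Xs R (u @ v)"
      by (intro pres_class_eqI pres_eq.pe_sym[OF pres_eq_append]) (simp_all add: pres_class_def)
    ultimately show "w \<in> pres_class Xs R (u @ v)" by simp
  next
    fix w assume "w \<in> pres_class Xs R (u @ v)"
    then show "\<exists>a\<in>pres_class Xs R u. \<exists>b\<in>pres_class Xs R v. w \<in> pres_class Xs R (a @ b)"
      using assms pres_class_self by blast
  qed
  then show ?thesis by (simp add: presented_group_def)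
qed

lemma group_presented_group: "group (presented_group Xs R)"
proof (rule groupI)
  fix x y z
  assume "x \<in> carrier (presented_group Xs R)" "y \<in> carrier (presented_group Xs R)"
    "z \<in> carrier (presented_group Xs R)"
  then show "x \<otimes>\<^bsub>presented_group Xs R\<^esub> y \<otimes>\<^bsub>presented_group Xs R\<^esub> z =
      x \<otimes>\<^bsub>presented_group Xs R\<^esub> (y \<otimes>\<^bsub>presented_group Xs R\<^esub> z)"
    by (auto simp: presented_group_carrier presented_group_mult)
next
  fix x assume "x \<in> carrier (presented_group Xs R)"
  then obtain w where w: "w \<in> words_on Xs" "x = pres_class Xs R w"
    by (auto simp: presented_group_carrier)
  then show "\<one>\<^bsub>presented_group Xs R\<^esub> \<otimes>\<^bsub>presented_group Xs R\<^esub> x = x"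
    by (simp add: presented_group_one presented_group_mult)
  have "pres_class Xs R (word_inv w) \<otimes>\<^bsub>presented_group Xs R\<^esub> x = \<one>\<^bsub>presented_group Xs R\<^esub>"
    using w by (simp add: presented_group_mult presented_group_one pres_class_eqI pres_eq_word_inv_append)
  moreover have "pres_class Xs R (word_inv w) \<in> carrier (presented_group Xs R)"
    using w by (simp add: presented_group_carrier)
  ultimately show "\<exists>y\<in>carrier (presented_group Xs R). y \<otimes>\<^bsub>presented_group Xs R\<^esub> x = \<one>\<^bsub>presented_group Xs R\<^esub>"
    by blast
qed (auto simp: presented_group_carrier presented_group_mult presented_group_one)

lemma presented_group_inv:
  assumes "w \<in> words_on Xs"
  shows "inv\<^bsub>presented_group Xs R\<^esub> (pres_class Xs R w) = pres_class Xs R (word_inv w)"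
  using assms
  by (intro group.inv_equality[OF group_presented_group])
    (auto simp: presented_group_mult presented_group_one presented_group_carrier
      pres_class_eqI pres_eq_word_inv_append)

lemma pres_gen_closed: "x \<in> Xs \<Longrightarrow> pres_gen Xs R x \<in> carrier (presented_group Xs R)"
  by (simp add: pres_gen_def presented_group_carrier)

lemma word_eval_simps [simp]:
  "word_eval G f [] = \<one>\<^bsub>G\<^esub>"
  "word_eval G f ((x, b) # w) = (if b then f x else inv\<^bsub>G\<^esub> (f x)) \<otimes>\<^bsub>G\<^esub> word_eval G f w"
  by (simp_all add: word_eval_def)

lemma word_eval_cong:
  "w \<in> words_on Xs \<Longrightarrow> (\<And>x. x \<in> Xs \<Longrightarrow> f x = g x) \<Longrightarrow> word_eval G f w = word_eval G g w"
proof (induction w)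
  case (Cons a w)
  then show ?case by (cases a) simp
qed simp

lemma word_eval_pres_gen:
  "w \<in> words_on Xs \<Longrightarrow> word_eval (presented_group Xs R) (pres_gen Xs R) w = pres_class Xs R w"
proof (induction w)
  case Nil
  show ?case by (simp add: presented_group_one)
next
  case (Cons a w)
  obtain x b where a: "a = (x, b)" by fastforce
  with Cons show ?case
    by (cases b) (simp_all add: pres_gen_def presented_group_mult presented_group_inv)
qed

lemma presented_group_induct [consumes 1, case_names one gen inv_gen]:
  fixes P :: "'x word set \<Rightarrow> bool"
  assumes h: "h \<in> carrier (presented_group Xs R)"
    and one: "P \<one>\<^bsub>presented_group Xs R\<^esub>"
    and gen: "\<And>x g. x \<in> Xs \<Longrightarrow> g \<in> carrier (presented_group Xs R) \<Longrightarrow> P g \<Longrightarrow>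
        P (pres_gen Xs R x \<otimes>\<^bsub>presented_group Xs R\<^esub> g)"
    and inv_gen: "\<And>x g. x \<in> Xs \<Longrightarrow> g \<in> carrier (presented_group Xs R) \<Longrightarrow> P g \<Longrightarrow>
        P (inv\<^bsub>presented_group Xs R\<^esub> (pres_gen Xs R x) \<otimes>\<^bsub>presented_group Xs R\<^esub> g)"
  shows "P h"
proof -
  interpret group "presented_group Xs R" by (rule group_presented_group)
  obtain w where w: "w \<in> words_on Xs" "h = pres_class Xs R w"
    using h by (auto simp: presented_group_carrier)
  have "word_eval (presented_group Xs R) (pres_gen Xs R) w \<in> carrier (presented_group Xs R) \<and>
      P (word_eval (presented_group Xs R) (pres_gen Xs R) w)"
    using w(1)
  proof (induction w)
    case (Cons a w)
    obtain x b where a: "a = (x, b)" by fastforce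
    with Cons show ?case
      by (cases b) (simp_all add: pres_gen_closed gen inv_gen)
  qed (simp add: one)
  then show ?thesis using w word_eval_pres_gen by metis
qed

context group
begin

lemma inv_mult_cancel_left: "x \<in> carrier G \<Longrightarrow> y \<in> carrier G \<Longrightarrow> inv x \<otimes> (x \<otimes> y) = y"
  by (simp add: m_assoc[symmetric])

lemma mult_inv_cancel_left: "x \<in> carrier G \<Longrightarrow> y \<in> carrier G \<Longrightarrow> x \<otimes> (inv x \<otimes> y) = y"
  by (simp add: m_assoc[symmetric])

lemma commute_mult:
  assumes "a \<in> carrier G" "b \<in> carrier G" "g \<in> carrier G" "a \<otimes> g = g \<otimes> a" "b \<otimes> g = g \<otimes> b"
  shows "a \<otimes> b \<otimes> g = g \<otimes> (a \<otimes> b)"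
  using assms by (metis m_assoc)

lemma commute_inv:
  assumes "a \<in> carrier G" "g \<in> carrier G" "a \<otimes> g = g \<otimes> a"
  shows "inv a \<otimes> g = g \<otimes> inv a"
  using assms by (metis inv_closed inv_solve_left m_assoc m_closed r_inv r_one)

lemma word_eval_closed: "f ` Xs \<subseteq> carrier G \<Longrightarrow> w \<in> words_on Xs \<Longrightarrow> word_eval G f w \<in> carrier G"
proof (induction w)
  case (Cons a w)
  then show ?case by (cases a) auto
qed simp

lemma word_eval_append:
  assumes f: "f ` Xs \<subseteq> carrier G" and "u \<in> words_on Xs" "v \<in> words_on Xs"
  shows "word_eval G f (u @ v) = word_eval G f u \<otimes> word_eval G f v"
  using assms(2)
proof (induction u)
  case Nil
  show ?case using word_eval_closed[OF f assms(3)] by simp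
next
  case (Cons a u)
  obtain x b where a: "a = (x, b)" by fastforce
  with Cons f show ?case
    using word_eval_closed[OF f] assms(3) by (auto simp: m_assoc)
qed

lemma word_eval_pres_eq:
  assumes f: "range f \<subseteq> carrier G"
    and rels: "\<And>r1 r2. (r1, r2) \<in> R \<Longrightarrow> word_eval G f r1 = word_eval G f r2"
  shows "pres_eq R u v \<Longrightarrow> word_eval G f u = word_eval G f v"
proof (induction rule: pres_eq.induct)
  case (pe_cancel u x b v)
  have "f x \<in> carrier G" using f by auto
  then have "word_eval G f [(x, b), (x, \<not> b)] = \<one>"
    by (cases b) simp_all
  moreover have "word_eval G f (u @ [(x, b), (x, \<not> b)] @ v)
      = word_eval G f u \<otimes> (word_eval G f [(x, b), (x, \<not> b)] \<otimes> word_eval G f v)"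
    by (simp only: word_eval_append[OF f] words_on_simps(5))
  ultimately show ?case
    using word_eval_closed[OF f] by (simp add: word_eval_append[OF f])
next
  case (pe_rel r1 r2 u v)
  then show ?case by (simp add: word_eval_append[OF f] rels)
qed simp_all

lemma induced_map_pres_class:
  assumes f: "f ` Xs \<subseteq> carrier G"
    and R: "R \<subseteq> words_on Xs \<times> words_on Xs"
    and rels: "\<And>r1 r2. (r1, r2) \<in> R \<Longrightarrow> word_eval G f r1 = word_eval G f r2"
    and w: "w \<in> words_on Xs"
  shows "induced_map G f (pres_class Xs R w) = word_eval G f w"
proof -
  \<comment> \<open>Cancellations may involve letters outside Xs, so evaluate along a total extension of f.\<close>
  define f' where "f' x = (if x \<in> Xs then f x else \<one>)" for x
  have eval_f': "word_eval G f' u = word_eval G f u" if "u \<in> words_on Xs" for u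
    using that by (rule word_eval_cong) (simp add: f'_def)
  have f': "range f' \<subseteq> carrier G" using f by (auto simp: f'_def)
  have rels': "word_eval G f' r1 = word_eval G f' r2" if "(r1, r2) \<in> R" for r1 r2
    using that R rels[OF that] eval_f' by auto
  let ?a = "SOME a. a \<in> pres_class Xs R w"
  have "?a \<in> pres_class Xs R w" using pres_class_self[OF w] by (rule someI)
  then have a: "?a \<in> words_on Xs" "pres_eq R w ?a" by (auto simp: pres_class_def)
  show ?thesis
    unfolding induced_map_def
    using word_eval_pres_eq[OF f' rels' a(2)] eval_f' a(1) w by simp
qed

lemma induced_map_hom:
  assumes f: "f ` Xs \<subseteq> carrier G"
    and R: "R \<subseteq> words_on Xs \<times> words_on Xs"
    and rels: "\<And>r1 r2. (r1, r2) \<in> R \<Longrightarrow> word_eval G f r1 = word_eval G f r2"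
  shows "induced_map G f \<in> hom (presented_group Xs R) G"
proof (rule homI)
  fix x y assume "x \<in> carrier (presented_group Xs R)" "y \<in> carrier (presented_group Xs R)"
  then obtain u v where "u \<in> words_on Xs" "x = pres_class Xs R u" "v \<in> words_on Xs" "y = pres_class Xs R v"
    by (auto simp: presented_group_carrier)
  then show "induced_map G f (x \<otimes>\<^bsub>presented_group Xs R\<^esub> y) = induced_map G f x \<otimes> induced_map G f y"
    by (simp add: presented_group_mult induced_map_pres_class[OF f R rels] word_eval_append[OF f])
qed (auto simp: presented_group_carrier induced_map_pres_class[OF f R rels] word_eval_closed[OF f])

end

section \<open>Central extensions\<close>

lemma cohomologous_trans:
  assumes G: "group G" and K: "comm_group K"
    and cd: "cohomologous G K c d" and de: "cohomologous G K d e"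
    and e: "\<And>a b. a \<in> carrier G \<Longrightarrow> b \<in> carrier G \<Longrightarrow> e a b \<in> carrier K"
  shows "cohomologous G K c e"
proof -
  interpret G: group G by (rule G)
  interpret K: comm_group K by (rule K)
  obtain f where f: "f \<in> carrier G \<rightarrow> carrier K"
    and cf: "\<And>a b. a \<in> carrier G \<Longrightarrow> b \<in> carrier G \<Longrightarrow>
       c a b = d a b \<otimes>\<^bsub>K\<^esub> (f a \<otimes>\<^bsub>K\<^esub> f b \<otimes>\<^bsub>K\<^esub> inv\<^bsub>K\<^esub> f (a \<otimes>\<^bsub>G\<^esub> b))"
    using cd unfolding cohomologous_def by blast
  obtain g where g: "g \<in> carrier G \<rightarrow> carrier K"
    and dg: "\<And>a b. a \<in> carrier G \<Longrightarrow> b \<in> carrier G \<Longrightarrow>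
       d a b = e a b \<otimes>\<^bsub>K\<^esub> (g a \<otimes>\<^bsub>K\<^esub> g b \<otimes>\<^bsub>K\<^esub> inv\<^bsub>K\<^esub> g (a \<otimes>\<^bsub>G\<^esub> b))"
    using de unfolding cohomologous_def by blast
  show ?thesis unfolding cohomologous_def
  proof (intro bexI ballI)
    show "(\<lambda>x. g x \<otimes>\<^bsub>K\<^esub> f x) \<in> carrier G \<rightarrow> carrier K"
      using f g by auto
  next
    fix a b assume a: "a \<in> carrier G" and b: "b \<in> carrier G"
    let ?ab = "a \<otimes>\<^bsub>G\<^esub> b"
    have "f a \<in> carrier K" "f b \<in> carrier K" "f ?ab \<in> carrier K"
      "g a \<in> carrier K" "g b \<in> carrier K" "g ?ab \<in> carrier K" "e a b \<in> carrier K"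
      using f g e a b by auto
    then show "c a b = e a b \<otimes>\<^bsub>K\<^esub> (g a \<otimes>\<^bsub>K\<^esub> f a \<otimes>\<^bsub>K\<^esub> (g b \<otimes>\<^bsub>K\<^esub> f b)
        \<otimes>\<^bsub>K\<^esub> inv\<^bsub>K\<^esub> (g ?ab \<otimes>\<^bsub>K\<^esub> f ?ab))"
      unfolding cf[OF a b] dg[OF a b] by (simp add: K.inv_mult K.m_ac)
  qed
qed

locale central_extension = E: group E + G: group G for E (structure) and G +
  fixes \<phi>
  assumes hom: "\<phi> \<in> hom E G"
    and kernel_central: "\<And>k h. k \<in> kernel E G \<phi> \<Longrightarrow> h \<in> carrier E \<Longrightarrow> h \<otimes> k = k \<otimes> h"
begin

sublocale phi: group_hom E G \<phi>
  by (intro group_hom.intro group_hom_axioms.intro E.is_group G.is_group hom)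

abbreviation K where "K \<equiv> E\<lparr>carrier := kernel E G \<phi>\<rparr>"

lemma in_kernel_iff: "k \<in> kernel E G \<phi> \<longleftrightarrow> k \<in> carrier E \<and> \<phi> k = \<one>\<^bsub>G\<^esub>"
  by (simp add: kernel_def)

lemma comm_group_kernel: "comm_group K"
  using subgroup.subgroup_is_group[OF phi.subgroup_kernel E.is_group]
  by (rule group.group_comm_groupI) (simp add: kernel_central in_kernel_iff)

lemma kernel_inv: "k \<in> kernel E G \<phi> \<Longrightarrow> inv\<^bsub>K\<^esub> k = inv k"
  by (rule E.m_inv_consistent[OF phi.subgroup_kernel])

lemma kernel_left_commute:
  assumes k: "k \<in> kernel E G \<phi>" and "a \<in> carrier E" "z \<in> carrier E"
  shows "a \<otimes> (k \<otimes> z) = k \<otimes> (a \<otimes> z)"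
  using assms kernel_central[OF k, of a] by (simp add: in_kernel_iff E.m_assoc[symmetric])

definition is_section where
  "is_section \<sigma> \<longleftrightarrow> \<sigma> \<in> carrier G \<rightarrow> carrier E \<and> (\<forall>g\<in>carrier G. \<phi> (\<sigma> g) = g)"

lemma is_sectionD:
  "is_section \<sigma> \<Longrightarrow> g \<in> carrier G \<Longrightarrow> \<sigma> g \<in> carrier E"
  "is_section \<sigma> \<Longrightarrow> g \<in> carrier G \<Longrightarrow> \<phi> (\<sigma> g) = g"
  by (auto simp: is_section_def)

lemma section_cocycle_in_kernel:
  assumes "is_section \<sigma>" "a \<in> carrier G" "b \<in> carrier G"
  shows "section_cocycle E G \<sigma> a b \<in> kernel E G \<phi>"
  using assms by (simp add: section_cocycle_def in_kernel_iff is_sectionD)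

lemma two_cocycle_section_cocycle:
  assumes s: "is_section \<sigma>"
  shows "two_cocycle G K (section_cocycle E G \<sigma>)"
  unfolding two_cocycle_def
proof (intro conjI ballI)
  fix a b assume "a \<in> carrier G" "b \<in> carrier G"
  then show "section_cocycle E G \<sigma> a b \<in> carrier K"
    using section_cocycle_in_kernel[OF s] by simp
next
  fix a b d assume a: "a \<in> carrier G" and b: "b \<in> carrier G" and d: "d \<in> carrier G"
  let ?c = "section_cocycle E G \<sigma>"
  have e: "\<sigma> a \<in> carrier E" "\<sigma> b \<in> carrier E" "\<sigma> d \<in> carrier E"
    "\<sigma> (a \<otimes>\<^bsub>G\<^esub> b) \<in> carrier E" "\<sigma> (b \<otimes>\<^bsub>G\<^esub> d) \<in> carrier E" "\<sigma> (a \<otimes>\<^bsub>G\<^esub> (b \<otimes>\<^bsub>G\<^esub> d)) \<in> carrier E"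
    using a b d by (simp_all add: is_sectionD[OF s])
  have bd: "?c b d \<in> kernel E G \<phi>" and ab: "?c a b \<in> kernel E G \<phi>"
    and abd: "?c (a \<otimes>\<^bsub>G\<^esub> b) d \<in> carrier E"
    using section_cocycle_in_kernel[OF s] a b d by (auto simp: in_kernel_iff)
  \<comment> \<open>Both sides equal \<sigma> a \<sigma> b \<sigma> d \<sigma>(abd)\<inverse>, once the central factor is moved out of the way.\<close>
  have "?c b d \<otimes> ?c a (b \<otimes>\<^bsub>G\<^esub> d) = ?c b d \<otimes> (\<sigma> a \<otimes> (\<sigma> (b \<otimes>\<^bsub>G\<^esub> d) \<otimes> inv \<sigma> (a \<otimes>\<^bsub>G\<^esub> (b \<otimes>\<^bsub>G\<^esub> d))))"
    unfolding section_cocycle_def[of _ _ _ a] using e by (simp add: E.m_assoc)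
  also have "\<dots> = \<sigma> a \<otimes> (?c b d \<otimes> (\<sigma> (b \<otimes>\<^bsub>G\<^esub> d) \<otimes> inv \<sigma> (a \<otimes>\<^bsub>G\<^esub> (b \<otimes>\<^bsub>G\<^esub> d))))"
    using kernel_left_commute[OF bd, of "\<sigma> a"] e by simp
  also have "\<dots> = \<sigma> a \<otimes> (\<sigma> b \<otimes> (\<sigma> d \<otimes> inv \<sigma> (a \<otimes>\<^bsub>G\<^esub> (b \<otimes>\<^bsub>G\<^esub> d))))"
    unfolding section_cocycle_def using e by (simp add: E.m_assoc E.inv_mult_cancel_left)
  also have "\<dots> = ?c a b \<otimes> ?c (a \<otimes>\<^bsub>G\<^esub> b) d"
    unfolding section_cocycle_def using e a b d by (simp add: E.m_assoc G.m_assoc E.inv_mult_cancel_left)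
  also have "\<dots> = ?c (a \<otimes>\<^bsub>G\<^esub> b) d \<otimes> ?c a b"
    using kernel_central[OF ab abd] by simp
  finally show "?c b d \<otimes>\<^bsub>K\<^esub> ?c a (b \<otimes>\<^bsub>G\<^esub> d) = ?c (a \<otimes>\<^bsub>G\<^esub> b) d \<otimes>\<^bsub>K\<^esub> ?c a b"
    by simp
qed

lemma cohomologous_section_cocycles:
  assumes s: "is_section \<sigma>" and t: "is_section \<tau>"
  shows "cohomologous G K (section_cocycle E G \<sigma>) (section_cocycle E G \<tau>)"
proof -
  define f where "f g = \<sigma> g \<otimes> inv (\<tau> g)" for g
  have fK: "f g \<in> kernel E G \<phi>" if "g \<in> carrier G" for g
    using that by (simp add: f_def in_kernel_iff is_sectionD[OF s] is_sectionD[OF t])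
  then have fE: "f g \<in> carrier E" if "g \<in> carrier G" for g
    using that by (simp add: in_kernel_iff)
  have \<sigma>_eq: "\<sigma> g = f g \<otimes> \<tau> g" if "g \<in> carrier G" for g
    using that by (simp add: f_def E.m_assoc is_sectionD[OF s] is_sectionD[OF t])
  show ?thesis unfolding cohomologous_def
  proof (intro bexI ballI)
    show "f \<in> carrier G \<rightarrow> carrier K" using fK by simp
  next
    fix a b assume a: "a \<in> carrier G" and b: "b \<in> carrier G"
    let ?ab = "a \<otimes>\<^bsub>G\<^esub> b"
    let ?A = "\<tau> a" and ?B = "\<tau> b" and ?C = "\<tau> ?ab"
    have e: "?A \<in> carrier E" "?B \<in> carrier E" "?C \<in> carrier E"
      "f a \<in> carrier E" "f b \<in> carrier E" "f ?ab \<in> carrier E"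
      using a b by (simp_all add: is_sectionD[OF t] fE)
    have fab: "f a \<otimes> f b \<in> kernel E G \<phi>"
      using fK a b subgroup.m_closed[OF phi.subgroup_kernel] by blast
    have "section_cocycle E G \<sigma> a b = f a \<otimes> (?A \<otimes> (f b \<otimes> (?B \<otimes> (inv ?C \<otimes> inv f ?ab))))"
      unfolding section_cocycle_def using a b e by (simp add: \<sigma>_eq E.m_assoc E.inv_mult_group)
    also have "\<dots> = (f a \<otimes> f b) \<otimes> (?A \<otimes> ?B \<otimes> inv ?C) \<otimes> inv f ?ab"
      using kernel_left_commute[OF fK[OF b], of ?A] e by (simp add: E.m_assoc)
    also have "\<dots> = (?A \<otimes> ?B \<otimes> inv ?C) \<otimes> (f a \<otimes> f b) \<otimes> inv f ?ab"
      using kernel_central[OF fab, of "?A \<otimes> ?B \<otimes> inv ?C"] e by simp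
    also have "\<dots> = (?A \<otimes> ?B \<otimes> inv ?C) \<otimes> (f a \<otimes> f b \<otimes> inv f ?ab)"
      using e by (simp add: E.m_assoc)
    finally show "section_cocycle E G \<sigma> a b =
        section_cocycle E G \<tau> a b \<otimes>\<^bsub>K\<^esub> (f a \<otimes>\<^bsub>K\<^esub> f b \<otimes>\<^bsub>K\<^esub> inv\<^bsub>K\<^esub> f ?ab)"
      using a b by (simp add: section_cocycle_def kernel_inv fK)
  qed
qed

lemma normalized_two_cocycle_section_cocycle:
  assumes s: "is_section \<sigma>" and one: "\<sigma> \<one>\<^bsub>G\<^esub> = \<one>"
  shows "normalized_two_cocycle G K (section_cocycle E G \<sigma>)"
  unfolding normalized_two_cocycle_def
  using two_cocycle_section_cocycle[OF s] one
  by (simp add: section_cocycle_def is_sectionD[OF s])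

lemma extension_class_eq_coh_class:
  assumes s: "is_section \<sigma>"
  shows "extension_class E G \<phi> = coh_class G K (section_cocycle E G \<sigma>)"
proof -
  have "coh_class G K (section_cocycle E G \<tau>) \<subseteq> coh_class G K (section_cocycle E G \<sigma>)"
    if t: "is_section \<tau>" for \<tau>
  proof
    fix d assume "d \<in> coh_class G K (section_cocycle E G \<tau>)"
    then have d: "two_cocycle G K d" "cohomologous G K d (section_cocycle E G \<tau>)"
      by (simp_all add: coh_class_def)
    have "cohomologous G K d (section_cocycle E G \<sigma>)"
      using cohomologous_trans[OF G.is_group comm_group_kernel d(2) cohomologous_section_cocycles[OF t s]]
        section_cocycle_in_kernel[OF s] by simp
    with d(1) show "d \<in> coh_class G K (section_cocycle E G \<sigma>)" by (simp add: coh_class_def)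
  qed
  with s show ?thesis
    unfolding extension_class_def is_section_def[symmetric] by blast
qed

end

section \<open>Coxeter groups and the adjoint group of the Coxeter quandle\<close>

locale coxeter_system =
  fixes m :: "'s \<Rightarrow> 's \<Rightarrow> enat"
  assumes coxeter_matrix: "coxeter_matrix m"
begin

abbreviation "W \<equiv> coxeter_group m"
abbreviation "Q \<equiv> coxeter_quandle m"
abbreviation "A \<equiv> adj_group m"

sublocale W: group W
  by (simp add: coxeter_group_def group_presented_group)

lemma cox_gen_closed [simp]: "cox_gen m s \<in> carrier W"
  by (simp add: cox_gen_def coxeter_group_def pres_gen_closed)

lemma cox_gen_square: "cox_gen m s \<otimes>\<^bsub>W\<^esub> cox_gen m s = \<one>\<^bsub>W\<^esub>"
proof -
  have "m s s = enat 1" using coxeter_matrix by (simp add: coxeter_matrix_def one_enat_def)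
  then have "([(s, True), (s, True)], []) \<in> coxeter_rels m"
    unfolding coxeter_rels_def by force
  from pres_eq.pe_rel[OF this, of "[]" "[]"]
  show ?thesis
    by (simp add: cox_gen_def pres_gen_def coxeter_group_def presented_group_mult
        presented_group_one pres_class_eqI)
qed

lemma inv_cox_gen [simp]: "inv\<^bsub>W\<^esub> (cox_gen m s) = cox_gen m s"
  by (rule W.inv_equality[OF cox_gen_square]) simp_all

lemma cox_prod_simps [simp]:
  "cox_prod m [] = \<one>\<^bsub>W\<^esub>" "cox_prod m (s # ss) = cox_gen m s \<otimes>\<^bsub>W\<^esub> cox_prod m ss"
  by (simp_all add: cox_prod_def)

lemma cox_prod_closed [simp]: "cox_prod m ss \<in> carrier W"
  by (induction ss) simp_all

lemma coxeter_group_induct [consumes 1, case_names one gen inv_gen]: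
  assumes "w \<in> carrier W"
    and "P \<one>\<^bsub>W\<^esub>"
    and "\<And>s g. g \<in> carrier W \<Longrightarrow> P g \<Longrightarrow> P (cox_gen m s \<otimes>\<^bsub>W\<^esub> g)"
    and "\<And>s g. g \<in> carrier W \<Longrightarrow> P g \<Longrightarrow> P (inv\<^bsub>W\<^esub> (cox_gen m s) \<otimes>\<^bsub>W\<^esub> g)"
  shows "P w"
  using assms unfolding coxeter_group_def cox_gen_def by (rule presented_group_induct) blast+

lemma ex_cox_prod:
  assumes "w \<in> carrier W" shows "\<exists>ss. cox_prod m ss = w"
  using assms
proof (induction rule: coxeter_group_induct)
  case one
  show ?case using cox_prod_simps(1) by blast
next
  case (gen s g)
  then show ?case by (metis cox_prod_simps(2))
next
  case (inv_gen s g)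
  then show ?case by (metis cox_prod_simps(2) inv_cox_gen)
qed

lemma reduced_expr_some:
  assumes "w \<in> carrier W" shows "reduced_expr m w (SOME ss. reduced_expr m w ss)"
proof -
  obtain ss0 where "cox_prod m ss0 = w" using ex_cox_prod[OF assms] by blast
  then have "\<exists>ss. reduced_expr m w ss"
    using ex_has_least_nat[of "\<lambda>ss. cox_prod m ss = w" ss0 length]
    by (auto simp: reduced_expr_def)
  then show ?thesis by (rule someI_ex)
qed

lemma coxeter_quandle_iff:
  "q \<in> Q \<longleftrightarrow> (\<exists>w\<in>carrier W. \<exists>s. q = inv\<^bsub>W\<^esub> w \<otimes>\<^bsub>W\<^esub> cox_gen m s \<otimes>\<^bsub>W\<^esub> w)"
  unfolding coxeter_quandle_def by blast

lemma coxeter_quandle_closed: "q \<in> Q \<Longrightarrow> q \<in> carrier W"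
  by (auto simp: coxeter_quandle_iff)

lemma cox_gen_in_quandle: "cox_gen m s \<in> Q"
  unfolding coxeter_quandle_iff by (metis W.inv_one W.l_one W.one_closed W.r_one cox_gen_closed)

lemma coxeter_quandle_conj:
  assumes g: "g \<in> carrier W" and q: "q \<in> Q"
  shows "inv\<^bsub>W\<^esub> g \<otimes>\<^bsub>W\<^esub> q \<otimes>\<^bsub>W\<^esub> g \<in> Q"
proof -
  obtain w s where w: "w \<in> carrier W" "q = inv\<^bsub>W\<^esub> w \<otimes>\<^bsub>W\<^esub> cox_gen m s \<otimes>\<^bsub>W\<^esub> w"
    using q by (auto simp: coxeter_quandle_iff)
  then have "inv\<^bsub>W\<^esub> g \<otimes>\<^bsub>W\<^esub> q \<otimes>\<^bsub>W\<^esub> g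
      = inv\<^bsub>W\<^esub> (w \<otimes>\<^bsub>W\<^esub> g) \<otimes>\<^bsub>W\<^esub> cox_gen m s \<otimes>\<^bsub>W\<^esub> (w \<otimes>\<^bsub>W\<^esub> g)"
    using g by (simp add: W.m_assoc W.inv_mult_group)
  with w g show ?thesis unfolding coxeter_quandle_iff by blast
qed

lemma coxeter_quandle_square:
  assumes "q \<in> Q" shows "q \<otimes>\<^bsub>W\<^esub> q = \<one>\<^bsub>W\<^esub>"
proof -
  obtain w s where w: "w \<in> carrier W" "q = inv\<^bsub>W\<^esub> w \<otimes>\<^bsub>W\<^esub> cox_gen m s \<otimes>\<^bsub>W\<^esub> w"
    using assms by (auto simp: coxeter_quandle_iff)
  then have "q \<otimes>\<^bsub>W\<^esub> q = inv\<^bsub>W\<^esub> w \<otimes>\<^bsub>W\<^esub> (cox_gen m s \<otimes>\<^bsub>W\<^esub> cox_gen m s) \<otimes>\<^bsub>W\<^esub> w"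
    by (simp add: W.m_assoc W.mult_inv_cancel_left)
  with w(1) show ?thesis by (simp add: cox_gen_square)
qed

lemma inv_coxeter_quandle [simp]: "q \<in> Q \<Longrightarrow> inv\<^bsub>W\<^esub> q = q"
  by (rule W.inv_equality[OF coxeter_quandle_square]) (simp_all add: coxeter_quandle_closed)

lemma quandle_op_closed: "x \<in> Q \<Longrightarrow> y \<in> Q \<Longrightarrow> quandle_op m x y \<in> Q"
  using coxeter_quandle_conj[of y x] coxeter_quandle_closed[of y] by (simp add: quandle_op_def)

sublocale A: group A
  by (simp add: adj_group_def group_presented_group)

lemma adj_group_induct [consumes 1, case_names one gen inv_gen]:
  assumes "h \<in> carrier A"
    and "P \<one>\<^bsub>A\<^esub>"
    and "\<And>x g. x \<in> Q \<Longrightarrow> g \<in> carrier A \<Longrightarrow> P g \<Longrightarrow> P (adj_gen m x \<otimes>\<^bsub>A\<^esub> g)"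
    and "\<And>x g. x \<in> Q \<Longrightarrow> g \<in> carrier A \<Longrightarrow> P g \<Longrightarrow> P (inv\<^bsub>A\<^esub> (adj_gen m x) \<otimes>\<^bsub>A\<^esub> g)"
  shows "P h"
  using assms unfolding adj_group_def adj_gen_def by (rule presented_group_induct)

lemma adj_gen_closed [simp]: "x \<in> Q \<Longrightarrow> adj_gen m x \<in> carrier A"
  by (simp add: adj_gen_def adj_group_def pres_gen_closed)

lemma adj_rels_words: "adj_rels m \<subseteq> words_on Q \<times> words_on Q"
  by (auto simp: adj_rels_def quandle_op_closed)

lemma word_eval_adj_rels: "(r1, r2) \<in> adj_rels m \<Longrightarrow> word_eval W id r1 = word_eval W id r2"
  by (auto simp: adj_rels_def quandle_op_def coxeter_quandle_closed W.m_assoc)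

lemma adj_phi_hom: "adj_phi m \<in> hom A W"
  unfolding adj_phi_def adj_group_def
  using coxeter_quandle_closed by (intro W.induced_map_hom adj_rels_words word_eval_adj_rels) auto

sublocale phi: group_hom A W "adj_phi m"
  by (intro group_hom.intro group_hom_axioms.intro A.is_group W.is_group adj_phi_hom)

lemma adj_phi_adj_gen [simp]: "x \<in> Q \<Longrightarrow> adj_phi m (adj_gen m x) = x"
  unfolding adj_phi_def adj_gen_def pres_gen_def
  using coxeter_quandle_closed
  by (subst W.induced_map_pres_class[OF _ adj_rels_words word_eval_adj_rels]) auto

lemma adj_gen_conj:
  assumes "x \<in> Q" "y \<in> Q"
  shows "inv\<^bsub>A\<^esub> (adj_gen m y) \<otimes>\<^bsub>A\<^esub> adj_gen m x \<otimes>\<^bsub>A\<^esub> adj_gen m y = adj_gen m (quandle_op m x y)"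
proof -
  have "([(y, False), (x, True), (y, True)], [(quandle_op m x y, True)]) \<in> adj_rels m"
    unfolding adj_rels_def using assms by blast
  from pres_eq.pe_rel[OF this, of "[]" "[]"] show ?thesis
    using assms quandle_op_closed
    by (simp add: adj_gen_def pres_gen_def adj_group_def presented_group_mult presented_group_inv
        pres_class_eqI)
qed

lemma adj_gen_swap:
  assumes x: "x \<in> Q" and y: "y \<in> Q"
  shows "adj_gen m x \<otimes>\<^bsub>A\<^esub> adj_gen m y = adj_gen m y \<otimes>\<^bsub>A\<^esub> adj_gen m (y \<otimes>\<^bsub>W\<^esub> x \<otimes>\<^bsub>W\<^esub> y)"
  using adj_gen_conj[OF x y, symmetric] x y
  by (simp add: quandle_op_def A.m_assoc A.mult_inv_cancel_left)

lemma adj_gen_swap_inv: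
  assumes x: "x \<in> Q" and y: "y \<in> Q"
  shows "adj_gen m x \<otimes>\<^bsub>A\<^esub> inv\<^bsub>A\<^esub> (adj_gen m y) = inv\<^bsub>A\<^esub> (adj_gen m y) \<otimes>\<^bsub>A\<^esub> adj_gen m (y \<otimes>\<^bsub>W\<^esub> x \<otimes>\<^bsub>W\<^esub> y)"
proof -
  let ?x' = "y \<otimes>\<^bsub>W\<^esub> x \<otimes>\<^bsub>W\<^esub> y"
  have x': "?x' \<in> Q" using quandle_op_closed[OF x y] by (simp add: quandle_op_def)
  have "y \<otimes>\<^bsub>W\<^esub> ?x' \<otimes>\<^bsub>W\<^esub> y = (y \<otimes>\<^bsub>W\<^esub> y) \<otimes>\<^bsub>W\<^esub> x \<otimes>\<^bsub>W\<^esub> (y \<otimes>\<^bsub>W\<^esub> y)"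
    using x y by (simp add: coxeter_quandle_closed W.m_assoc)
  then have "adj_gen m ?x' \<otimes>\<^bsub>A\<^esub> adj_gen m y = adj_gen m y \<otimes>\<^bsub>A\<^esub> adj_gen m x"
    using adj_gen_swap[OF x' y] x y by (simp add: coxeter_quandle_square coxeter_quandle_closed)
  then have "adj_gen m ?x' = adj_gen m y \<otimes>\<^bsub>A\<^esub> adj_gen m x \<otimes>\<^bsub>A\<^esub> inv\<^bsub>A\<^esub> (adj_gen m y)"
    using x y x' by (simp add: A.inv_solve_right)
  then show ?thesis
    using x y by (simp add: A.m_assoc A.inv_mult_cancel_left)
qed

lemma adj_gen_mult_commute:
  assumes h: "h \<in> carrier A" and x: "x \<in> Q"
  shows "adj_gen m x \<otimes>\<^bsub>A\<^esub> h
    = h \<otimes>\<^bsub>A\<^esub> adj_gen m (inv\<^bsub>W\<^esub> (adj_phi m h) \<otimes>\<^bsub>W\<^esub> x \<otimes>\<^bsub>W\<^esub> adj_phi m h)"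
proof -
  let ?P = "\<lambda>h. \<forall>x\<in>Q. adj_gen m x \<otimes>\<^bsub>A\<^esub> h
    = h \<otimes>\<^bsub>A\<^esub> adj_gen m (inv\<^bsub>W\<^esub> (adj_phi m h) \<otimes>\<^bsub>W\<^esub> x \<otimes>\<^bsub>W\<^esub> adj_phi m h)"
  \<comment> \<open>Both e_y and e_y\<inverse> act as y: points of Q are involutions, so y x y is the conjugate of x.\<close>
  have step: "?P (g \<otimes>\<^bsub>A\<^esub> h)"
    if g: "g \<in> carrier A" "adj_phi m g \<in> Q"
      and swap: "\<And>x. x \<in> Q \<Longrightarrow>
        adj_gen m x \<otimes>\<^bsub>A\<^esub> g = g \<otimes>\<^bsub>A\<^esub> adj_gen m (adj_phi m g \<otimes>\<^bsub>W\<^esub> x \<otimes>\<^bsub>W\<^esub> adj_phi m g)"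
      and h: "h \<in> carrier A" "?P h"
    for g h
  proof
    fix x assume x: "x \<in> Q"
    let ?y = "adj_phi m g" and ?p = "adj_phi m h"
    have x': "?y \<otimes>\<^bsub>W\<^esub> x \<otimes>\<^bsub>W\<^esub> ?y \<in> Q"
      using quandle_op_closed[OF x g(2)] by (simp add: quandle_op_def)
    have conj: "inv\<^bsub>W\<^esub> (adj_phi m (g \<otimes>\<^bsub>A\<^esub> h)) \<otimes>\<^bsub>W\<^esub> x \<otimes>\<^bsub>W\<^esub> adj_phi m (g \<otimes>\<^bsub>A\<^esub> h)
        = inv\<^bsub>W\<^esub> ?p \<otimes>\<^bsub>W\<^esub> (?y \<otimes>\<^bsub>W\<^esub> x \<otimes>\<^bsub>W\<^esub> ?y) \<otimes>\<^bsub>W\<^esub> ?p"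
      using g h(1) x by (simp add: W.inv_mult_group W.m_assoc coxeter_quandle_closed)
    have "adj_gen m x \<otimes>\<^bsub>A\<^esub> (g \<otimes>\<^bsub>A\<^esub> h) = g \<otimes>\<^bsub>A\<^esub> (adj_gen m (?y \<otimes>\<^bsub>W\<^esub> x \<otimes>\<^bsub>W\<^esub> ?y) \<otimes>\<^bsub>A\<^esub> h)"
      using swap[OF x] g(1) h(1) x x' by (simp add: A.m_assoc[symmetric])
    also have "\<dots> = g \<otimes>\<^bsub>A\<^esub> h \<otimes>\<^bsub>A\<^esub>
        adj_gen m (inv\<^bsub>W\<^esub> (adj_phi m (g \<otimes>\<^bsub>A\<^esub> h)) \<otimes>\<^bsub>W\<^esub> x \<otimes>\<^bsub>W\<^esub> adj_phi m (g \<otimes>\<^bsub>A\<^esub> h))"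
      unfolding conj using h x' g(1) coxeter_quandle_conj[OF phi.hom_closed[OF h(1)] x']
      by (simp add: A.m_assoc)
    finally show "adj_gen m x \<otimes>\<^bsub>A\<^esub> (g \<otimes>\<^bsub>A\<^esub> h) = g \<otimes>\<^bsub>A\<^esub> h \<otimes>\<^bsub>A\<^esub>
        adj_gen m (inv\<^bsub>W\<^esub> (adj_phi m (g \<otimes>\<^bsub>A\<^esub> h)) \<otimes>\<^bsub>W\<^esub> x \<otimes>\<^bsub>W\<^esub> adj_phi m (g \<otimes>\<^bsub>A\<^esub> h))" .
  qed
  from h have "?P h"
  proof (induction rule: adj_group_induct)
    case one
    show ?case using coxeter_quandle_closed by simp
  next
    case (gen y g)
    then show ?case by (intro step) (simp_all add: adj_gen_swap)
  next
    case (inv_gen y g)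
    then show ?case by (intro step) (simp_all add: adj_gen_swap_inv)
  qed
  with x show ?thesis by blast
qed

lemma adj_phi_kernel_central:
  assumes k: "k \<in> kernel A W (adj_phi m)" and h: "h \<in> carrier A"
  shows "h \<otimes>\<^bsub>A\<^esub> k = k \<otimes>\<^bsub>A\<^esub> h"
proof -
  have kA: "k \<in> carrier A" and phik: "adj_phi m k = \<one>\<^bsub>W\<^esub>"
    using k by (auto simp: kernel_def)
  have gen_commute: "adj_gen m x \<otimes>\<^bsub>A\<^esub> k = k \<otimes>\<^bsub>A\<^esub> adj_gen m x" if "x \<in> Q" for x
    using adj_gen_mult_commute[OF kA that] that phik by (simp add: coxeter_quandle_closed)
  from h show ?thesis
  proof (induction rule: adj_group_induct)
    case (gen x g)
    then show ?case using gen_commute by (intro A.commute_mult kA) simp_all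
  next
    case (inv_gen x g)
    then show ?case using gen_commute by (intro A.commute_mult A.commute_inv kA) simp_all
  qed (simp add: kA)
qed

sublocale ext: central_extension A W "adj_phi m"
  by (intro central_extension.intro central_extension_axioms.intro A.is_group W.is_group
      adj_phi_hom adj_phi_kernel_central)

definition adj_prod :: "'s list \<Rightarrow> 's word set word set" where
  "adj_prod ss = foldr (\<lambda>s acc. adj_gen m (cox_gen m s) \<otimes>\<^bsub>A\<^esub> acc) ss \<one>\<^bsub>A\<^esub>"

lemma adj_prod_simps [simp]:
  "adj_prod [] = \<one>\<^bsub>A\<^esub>" "adj_prod (s # ss) = adj_gen m (cox_gen m s) \<otimes>\<^bsub>A\<^esub> adj_prod ss"
  by (simp_all add: adj_prod_def)

lemma adj_prod_closed [simp]: "adj_prod ss \<in> carrier A"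
  by (induction ss) (simp_all add: cox_gen_in_quandle)

lemma adj_phi_adj_prod [simp]: "adj_phi m (adj_prod ss) = cox_prod m ss"
  by (induction ss) (simp_all add: cox_gen_in_quandle)

lemma F_map_eq_adj_prod: "F_map m w = adj_prod (SOME ss. reduced_expr m w ss)"
  by (simp add: F_map_def adj_prod_def)

lemma F_map_is_section: "ext.is_section (F_map m)"
  unfolding ext.is_section_def F_map_eq_adj_prod
  using reduced_expr_some unfolding reduced_expr_def by simp

lemma F_map_one: "F_map m \<one>\<^bsub>W\<^esub> = \<one>\<^bsub>A\<^esub>"
proof -
  define ss where "ss = (SOME ss. reduced_expr m \<one>\<^bsub>W\<^esub> ss)"
  have "reduced_expr m \<one>\<^bsub>W\<^esub> ss"
    unfolding ss_def by (simp add: reduced_expr_some)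
  then have "length ss \<le> length ([] :: 's list)"
    unfolding reduced_expr_def by (metis cox_prod_simps(1))
  then show ?thesis by (simp add: F_map_eq_adj_prod ss_def[symmetric])
qed

end

theorem proposition4p3:
  fixes m :: "'s::finite \<Rightarrow> 's \<Rightarrow> enat"
  assumes "coxeter_matrix m"
  shows "normalized_two_cocycle (coxeter_group m) (C_group m) (cox_c m)
       \<and> coh_class (coxeter_group m) (C_group m) (cox_c m)
           = extension_class (adj_group m) (coxeter_group m) (adj_phi m)"
proof -
  interpret coxeter_system m by (rule coxeter_system.intro) (rule assms)
  have "cox_c m = section_cocycle A W (F_map m)"
    by (simp add: fun_eq_iff cox_c_def section_cocycle_def)
  moreover have "C_group m = A\<lparr>carrier := kernel A W (adj_phi m)\<rparr>"
    by (simp add: C_group_def)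
  ultimately show ?thesis
    using ext.normalized_two_cocycle_section_cocycle[OF F_map_is_section F_map_one]
      ext.extension_class_eq_coh_class[OF F_map_is_section]
    by simp
qed

end
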